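(* Let $R$ be a commutative ring containing $\mathbb Q$, let $f\in1+xR[[x]]$, and for $n\ge0$ set $$P_n:=\sum_{s=0}^n\frac{(-1)^s}{s!\,(n-s)!}\prod_{k=-(n-s)}^{s}f(kx)\in R[[x]].$$ Then the coefficients of $x^0,\dots,x^{n-1}$ in $P_n$ vanish and the coefficient of $x^n$ equals $(-1)^n$ times the coefficient of $x^n$ in $f^{n+1}$, i.e. $$P_n=(-1)^n\Bigl(\frac1{n!}\frac{d^n}{dx^n}\Big|_{x=0}f(x)^{n+1}\Bigr)x^n+O(x^{n+1}).$$ *)

theory Defs
  imports "HOL-Computational_Algebra.Formal_Power_Series"
begin

text \<open>Inverse of a positive integer in a commutative ring containing the rationals
  (i.e. a ring in which every positive integer is a unit).\<close>
definition nat_inv :: "nat \<Rightarrow> 'a::comm_ring_1" where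
  "nat_inv n = (SOME y. of_nat n * y = 1)"

definition P_series :: "'a::comm_ring_1 fps \<Rightarrow> nat \<Rightarrow> 'a fps" where
  "P_series f n = (\<Sum>s = 0..n.
      fps_const ((-1) ^ s * nat_inv (fact s) * nat_inv (fact (n - s))) *
      (\<Prod>k \<in> {- int (n - s) .. int s}. f oo (fps_const (of_int k) * fps_X)))"

end

theory Submission
  imports Defs "HOL-Computational_Algebra.Polynomial"
begin

text \<open>Fix m and treat the shift as a variable Y: the coefficient of x^m in
  \<open>\<Prod>i=0..n. f((i + Y) x)\<close> is a polynomial Q(Y) of degree at most m, and its Y^m-coefficient is
  the coefficient of x^m in f^(n+1), since only the top-degree parts of the factors contribute to it.
  Reindexing k = i + s - n turns the coefficient of x^m in P_n into 1/n! times the n-th finite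
  difference \<open>\<Sum>s. (-1)^s (n choose s) Q(s - n)\<close>, and the n-th finite difference of a polynomial of
  degree at most n is (-1)^n n! times its coefficient of Y^n. This vanishes for m < n and gives the
  claim for m = n.\<close>

lemma coeff_mult_degree_le_sum:
  fixes p q :: "'a::comm_semiring_1 poly"
  assumes "degree p \<le> a" "degree q \<le> b"
  shows "coeff (p * q) (a + b) = coeff p a * coeff q b"
proof -
  have "coeff p i * coeff q (a + b - i) = (if i = a then coeff p a * coeff q b else 0)" for i
    using assms by (cases i a rule: linorder_cases) (auto simp: coeff_eq_0)
  then show ?thesis
    by (simp add: coeff_mult)
qed

definition graded_fps :: "'a::comm_semiring_1 poly fps \<Rightarrow> bool" where
  "graded_fps F \<longleftrightarrow> (\<forall>m. degree (fps_nth F m) \<le> m)"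

definition fps_top_coeffs :: "'a::comm_semiring_1 poly fps \<Rightarrow> 'a fps" where
  "fps_top_coeffs F = Abs_fps (\<lambda>m. coeff (fps_nth F m) m)"

definition fps_poly_eval :: "'a::comm_semiring_1 poly fps \<Rightarrow> 'a \<Rightarrow> 'a fps" where
  "fps_poly_eval F y = Abs_fps (\<lambda>m. poly (fps_nth F m) y)"

lemma fps_top_coeffs_nth: "fps_nth (fps_top_coeffs F) m = coeff (fps_nth F m) m"
  by (simp add: fps_top_coeffs_def)

lemma graded_fps_mult:
  assumes "graded_fps F" "graded_fps G"
  shows "graded_fps (F * G)"
  unfolding graded_fps_def fps_mult_nth
proof (intro allI degree_sum_le)
  fix m i :: nat assume "i \<in> {0..m}"
  then have "degree (fps_nth F i) + degree (fps_nth G (m - i)) \<le> m"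
    using assms unfolding graded_fps_def by (metis add_le_mono le_add_diff_inverse atLeastAtMost_iff)
  then show "degree (fps_nth F i * fps_nth G (m - i)) \<le> m"
    using degree_mult_le order_trans by blast
qed simp

lemma fps_top_coeffs_mult:
  assumes "graded_fps F" "graded_fps G"
  shows "fps_top_coeffs (F * G) = fps_top_coeffs F * fps_top_coeffs G"
proof (rule fps_ext)
  fix m
  have "coeff (fps_nth F i * fps_nth G (m - i)) m =
      coeff (fps_nth F i) i * coeff (fps_nth G (m - i)) (m - i)" if "i \<le> m" for i
    using coeff_mult_degree_le_sum[of "fps_nth F i" i "fps_nth G (m - i)" "m - i"] assms that
    by (simp add: graded_fps_def)
  then show "fps_nth (fps_top_coeffs (F * G)) m = fps_nth (fps_top_coeffs F * fps_top_coeffs G) m"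
    by (simp add: fps_top_coeffs_def fps_mult_nth coeff_sum)
qed

lemma graded_fps_1: "graded_fps 1"
  by (simp add: graded_fps_def)

lemma fps_top_coeffs_1: "fps_top_coeffs 1 = 1"
  by (simp add: fps_top_coeffs_def fps_eq_iff )

lemma graded_fps_prod:
  "(\<And>i. i \<in> I \<Longrightarrow> graded_fps (F i)) \<Longrightarrow> graded_fps (\<Prod>i\<in>I. F i)"
  by (induction I rule: infinite_finite_induct) (auto intro: graded_fps_1 graded_fps_mult)

lemma fps_top_coeffs_prod:
  "(\<And>i. i \<in> I \<Longrightarrow> graded_fps (F i)) \<Longrightarrow>
    fps_top_coeffs (\<Prod>i\<in>I. F i) = (\<Prod>i\<in>I. fps_top_coeffs (F i))"
  by (induction I rule: infinite_finite_induct)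
     (auto simp: fps_top_coeffs_1 fps_top_coeffs_mult graded_fps_prod)

lemma fps_poly_eval_nth: "fps_nth (fps_poly_eval F y) m = poly (fps_nth F m) y"
  by (simp add: fps_poly_eval_def)

lemma fps_poly_eval_1: "fps_poly_eval 1 y = 1"
  by (simp add: fps_poly_eval_def fps_eq_iff )

lemma fps_poly_eval_mult: "fps_poly_eval (F * G) y = fps_poly_eval F y * fps_poly_eval G y"
  by (simp add: fps_poly_eval_def fps_eq_iff fps_mult_nth poly_sum)

lemma fps_poly_eval_prod: "fps_poly_eval (\<Prod>i\<in>I. F i) y = (\<Prod>i\<in>I. fps_poly_eval (F i) y)"
  by (induction I rule: infinite_finite_induct) (auto simp: fps_poly_eval_1 fps_poly_eval_mult)

text \<open>The series f((c + Y) x), with coefficients polynomials in Y.\<close>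

definition fps_subst_linear :: "'a::comm_ring_1 fps \<Rightarrow> 'a \<Rightarrow> 'a poly fps" where
  "fps_subst_linear f c = Abs_fps (\<lambda>j. smult (fps_nth f j) ([:c, 1:] ^ j))"

lemma graded_fps_subst_linear: "graded_fps (fps_subst_linear f c)"
  unfolding graded_fps_def fps_subst_linear_def
  by (metis degree_linear_power degree_smult_le fps_nth_Abs_fps)

lemma fps_top_coeffs_subst_linear: "fps_top_coeffs (fps_subst_linear f c) = f"
  by (simp add: fps_top_coeffs_def fps_subst_linear_def coeff_linear_power fps_eq_iff)

lemma fps_poly_eval_subst_linear:
  "fps_poly_eval (fps_subst_linear f c) y = f oo (fps_const (c + y) * fps_X)"
  unfolding fps_compose_linear
  by (simp add: fps_poly_eval_def fps_subst_linear_def mult.commute)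

lemma alternating_binomial_sum_Suc:
  fixes g :: "nat \<Rightarrow> 'a::comm_ring_1"
  shows "(\<Sum>s\<le>Suc n. (-1)^s * of_nat (Suc n choose s) * g s) =
         (\<Sum>s\<le>n. (-1)^s * of_nat (n choose s) * (g s - g (Suc s)))"
proof -
  have L: "(\<Sum>s\<le>Suc n. (-1)^s * of_nat (Suc n choose s) * g s) =
     g 0 - (\<Sum>s\<le>n. (-1)^s * of_nat (n choose s) * g (Suc s))
         - (\<Sum>s\<le>n. (-1)^s * of_nat (n choose Suc s) * g (Suc s))"
    by (simp only: sum.atMost_Suc_shift)
       (simp add: algebra_simps sum.distrib sum_negf sum_subtractf)
  have "(\<Sum>s\<le>n. (-1)^s * of_nat (n choose s) * g s) =
      (\<Sum>s\<le>Suc n. (-1)^s * of_nat (n choose s) * g s)"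
    by (simp add: binomial_eq_0)
  also have "\<dots> = g 0 - (\<Sum>s\<le>n. (-1)^s * of_nat (n choose Suc s) * g (Suc s))"
    by (simp only: sum.atMost_Suc_shift) (simp add: sum_negf)
  finally have R: "(\<Sum>s\<le>n. (-1)^s * of_nat (n choose s) * g s) = \<dots>" .
  show ?thesis
    unfolding L by (simp add: right_diff_distrib sum_subtractf R)
qed

lemma alternating_binomial_sum_power:
  fixes b :: "'a::comm_ring_1"
  assumes "d \<le> n"
  shows "(\<Sum>s\<le>n. (-1)^s * of_nat (n choose s) * (of_nat s + b)^d) =
     (if d = n then (-1)^n * of_nat (fact n) else 0)"
  using assms
proof (induction n arbitrary: d)
  case 0
  then show ?case by simp
next
  case (Suc n)
  have step: "(of_nat s + b)^d - (of_nat (Suc s) + b)^d =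
      - (\<Sum>e<d. of_nat (d choose e) * (of_nat s + b)^e)" for s
  proof -
    have "(of_nat (Suc s) + b)^d = ((of_nat s + b) + 1)^d"
      by (simp add: algebra_simps)
    also have "\<dots> = (\<Sum>e<d. of_nat (d choose e) * (of_nat s + b)^e) + (of_nat s + b)^d"
      by (simp add: binomial_ring lessThan_Suc_atMost[symmetric])
    finally show ?thesis by simp
  qed
  have "(\<Sum>s\<le>Suc n. (-1)^s * of_nat (Suc n choose s) * (of_nat s + b)^d) =
      - (\<Sum>e<d. of_nat (d choose e) *
          (\<Sum>s\<le>n. (-1)^s * of_nat (n choose s) * (of_nat s + b)^e))"
    unfolding alternating_binomial_sum_Suc step
    by (simp only: sum_distrib_left mult_minus_right sum_negf) (subst sum.swap, simp add: mult_ac)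
  also have "\<dots> =
      - (\<Sum>e<d. of_nat (d choose e) * (if e = n then (-1)^n * of_nat (fact n) else 0))"
    using Suc by (intro arg_cong[where f=uminus] sum.cong) auto
  also have "\<dots> = (if d = Suc n then (-1)^Suc n * of_nat (fact (Suc n)) else 0)"
    using Suc.prems
    by (cases "d = Suc n") (auto simp: if_distrib[of "\<lambda>x. _ * x"] algebra_simps cong: if_cong)
  finally show ?case .
qed

lemma alternating_binomial_sum_poly:
  fixes p :: "'a::comm_ring_1 poly"
  assumes "degree p \<le> n"
  shows "(\<Sum>s\<le>n. (-1)^s * of_nat (n choose s) * poly p (of_nat s + b)) =
    (-1)^n * of_nat (fact n) * coeff p n"
proof -
  have poly_p: "poly p x = (\<Sum>d\<le>n. coeff p d * x^d)" for x
    unfolding poly_altdef by (rule sum.mono_neutral_left) (use assms in \<open>auto simp: coeff_eq_0\<close>)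
  have "(\<Sum>s\<le>n. (-1)^s * of_nat (n choose s) * poly p (of_nat s + b)) =
     (\<Sum>d\<le>n. coeff p d * (\<Sum>s\<le>n. (-1)^s * of_nat (n choose s) * (of_nat s + b)^d))"
    unfolding poly_p by (simp only: sum_distrib_left) (subst sum.swap, simp add: mult_ac)
  also have "\<dots> = (\<Sum>d\<le>n. coeff p d * (if d = n then (-1)^n * of_nat (fact n) else 0))"
    by (intro sum.cong refl) (simp add: alternating_binomial_sum_power)
  also have "\<dots> = (-1)^n * of_nat (fact n) * coeff p n"
    by (simp add: if_distrib[of "\<lambda>x. _ * x"] cong: if_cong)
  finally show ?thesis .
qed

lemma of_nat_mult_nat_inv:
  assumes QQ: "\<And>m::nat. m > 0 \<Longrightarrow> (of_nat m :: 'a::comm_ring_1) dvd 1" and "k > 0"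
  shows "(of_nat k :: 'a) * nat_inv k = 1"
proof -
  have "\<exists>y. (of_nat k :: 'a) * y = 1"
    using QQ[OF \<open>k > 0\<close>] by (metis dvd_def)
  then show ?thesis
    unfolding nat_inv_def by (rule someI_ex)
qed

lemma nat_inv_mult:
  assumes QQ: "\<And>m::nat. m > 0 \<Longrightarrow> (of_nat m :: 'a::comm_ring_1) dvd 1" and "a > 0" "b > 0"
  shows "(nat_inv (a * b) :: 'a) = nat_inv a * nat_inv b"
proof -
  have "(of_nat (a * b) :: 'a) * (nat_inv a * nat_inv b) = 1"
    using of_nat_mult_nat_inv[OF QQ, of a] of_nat_mult_nat_inv[OF QQ, of b] assms
    by (simp add: algebra_simps)
  moreover have "(of_nat (a * b) :: 'a) * nat_inv (a * b) = 1"
    using of_nat_mult_nat_inv[OF QQ, of "a * b"] assms by simp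
  ultimately show ?thesis
    by (metis mult.assoc mult.commute mult_1_right)
qed

lemma nat_inv_fact_mult:
  assumes QQ: "\<And>m::nat. m > 0 \<Longrightarrow> (of_nat m :: 'a::comm_ring_1) dvd 1" and "s \<le> n"
  shows "(nat_inv (fact s) * nat_inv (fact (n - s)) :: 'a) =
    nat_inv (fact n) * of_nat (n choose s)"
proof -
  have "(nat_inv (fact n) :: 'a) = nat_inv (fact s) * nat_inv (fact (n - s)) * nat_inv (n choose s)"
    using binomial_fact_lemma[OF \<open>s \<le> n\<close>] \<open>s \<le> n\<close>
    by (metis nat_inv_mult[OF QQ] fact_gt_zero nat_0_less_mult_iff zero_less_binomial)
  then show ?thesis
    using of_nat_mult_nat_inv[OF QQ, of "n choose s"] \<open>s \<le> n\<close>
    by (simp add: mult.assoc mult.commute[of "nat_inv (n choose s)"])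
qed

lemma P_series_altdef:
  fixes f :: "'a::comm_ring_1 fps"
  assumes QQ: "\<And>m::nat. m > 0 \<Longrightarrow> (of_nat m :: 'a) dvd 1"
  shows "P_series f n = fps_const (nat_inv (fact n)) *
    (\<Sum>s\<le>n. fps_const ((-1)^s * of_nat (n choose s)) *
      (\<Prod>i\<le>n. f oo (fps_const (of_nat i + of_nat s - of_nat n) * fps_X)))"
  unfolding P_series_def atLeast0AtMost sum_distrib_left
proof (rule sum.cong)
  fix s assume "s \<in> {..n}"
  then have "s \<le> n" by simp
  have reindex: "(\<Prod>k\<in>{- int (n - s)..int s}. f oo (fps_const (of_int k) * fps_X)) =
      (\<Prod>i\<le>n. f oo (fps_const (of_nat i + of_nat s - of_nat n) * fps_X))"
    by (rule prod.reindex_bij_witness[of _ "\<lambda>i. int i - int (n - s)" "\<lambda>k. nat (k + int (n - s))"])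
       (use \<open>s \<le> n\<close> in \<open>auto simp: of_nat_diff algebra_simps\<close>)
  have const: "(-1)^s * nat_inv (fact s) * nat_inv (fact (n - s)) =
      nat_inv (fact n) * ((-1)^s * of_nat (n choose s) :: 'a)"
    using nat_inv_fact_mult[OF QQ \<open>s \<le> n\<close>] by (metis mult.assoc mult.left_commute)
  show "fps_const ((-1)^s * nat_inv (fact s) * nat_inv (fact (n - s))) *
      (\<Prod>k\<in>{- int (n - s)..int s}. f oo (fps_const (of_int k) * fps_X)) =
    fps_const (nat_inv (fact n)) * (fps_const ((-1)^s * of_nat (n choose s)) *
      (\<Prod>i\<le>n. f oo (fps_const (of_nat i + of_nat s - of_nat n) * fps_X)))"
    unfolding reindex const fps_const_mult[symmetric] by (rule mult.assoc)
qed simp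

lemma P_series_nth:
  fixes f :: "'a::comm_ring_1 fps"
  assumes QQ: "\<And>m::nat. m > 0 \<Longrightarrow> (of_nat m :: 'a) dvd 1"
    and "degree (fps_nth (\<Prod>i\<le>n. fps_subst_linear f (of_nat i)) m) \<le> n"
  shows "fps_nth (P_series f n) m =
    (-1)^n * coeff (fps_nth (\<Prod>i\<le>n. fps_subst_linear f (of_nat i)) m) n"
proof -
  define Q where "Q = fps_nth (\<Prod>i\<le>n. fps_subst_linear f (of_nat i)) m"
  have prod_nth: "fps_nth (\<Prod>i\<le>n. f oo (fps_const (of_nat i + y) * fps_X)) m = poly Q y" for y
    by (simp add: Q_def fps_poly_eval_nth flip: fps_poly_eval_subst_linear fps_poly_eval_prod)
  have "fps_nth (P_series f n) m = nat_inv (fact n) * (\<Sum>s\<le>n. (-1)^s * of_nat (n choose s) *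
      fps_nth (\<Prod>i\<le>n. f oo (fps_const (of_nat i + of_nat s - of_nat n) * fps_X)) m)"
    by (simp add: P_series_altdef[OF QQ] fps_sum_nth mult.assoc)
  also have "\<dots> =
      nat_inv (fact n) * (\<Sum>s\<le>n. (-1)^s * of_nat (n choose s) * poly Q (of_nat s - of_nat n))"
    by (simp add: add_diff_eq flip: prod_nth)
  also have "\<dots> = nat_inv (fact n) * ((-1)^n * of_nat (fact n) * coeff Q n)"
    using alternating_binomial_sum_poly[of Q n "- of_nat n"] assms(2) by (simp add: Q_def)
  also have "\<dots> = (of_nat (fact n) * nat_inv (fact n)) * ((-1)^n * coeff Q n)"
    by (simp only: ac_simps)
  also have "\<dots> = (-1)^n * coeff Q n"
    using of_nat_mult_nat_inv[OF QQ, of "fact n"] by simp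
  finally show ?thesis
    unfolding Q_def .
qed

theorem mainTheorem19:
  fixes f :: "'a::comm_ring_1 fps" and n :: nat
  assumes QQ: "\<And>m::nat. m > 0 \<Longrightarrow> (of_nat m :: 'a) dvd 1"
    and f0: "fps_nth f 0 = 1"
  shows "(\<forall>m < n. fps_nth (P_series f n) m = 0) \<and>
         fps_nth (P_series f n) n = (-1) ^ n * fps_nth (f ^ (n + 1)) n"
proof -
  define F where "F = (\<Prod>i\<le>n. fps_subst_linear f (of_nat i))"
  have "graded_fps F"
    by (simp add: F_def graded_fps_prod graded_fps_subst_linear)
  then have degree_F: "degree (fps_nth F m) \<le> m" for m
    by (simp add: graded_fps_def)
  have "fps_top_coeffs F = f ^ (n + 1)"
    by (simp add: F_def fps_top_coeffs_prod graded_fps_subst_linear fps_top_coeffs_subst_linear)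
  then have top_F: "coeff (fps_nth F n) n = fps_nth (f ^ (n + 1)) n"
    by (metis fps_top_coeffs_nth)
  have "fps_nth (P_series f n) m = 0" if "m < n" for m
    using P_series_nth[OF QQ, of f n m] degree_F[of m] that by (simp add: F_def coeff_eq_0)
  moreover have "fps_nth (P_series f n) n = (-1) ^ n * fps_nth (f ^ (n + 1)) n"
    using P_series_nth[OF QQ, of f n n] degree_F[of n] top_F by (simp add: F_def)
  ultimately show ?thesis
    by blast
qed

end
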